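(* There exist universal positive constants $c$ and $c_6$ such that, in the setting of the context, whenever $n\ge c_6$: almost surely for every realization of $\widetilde{\mathbf C}$, with probability at least $1-\frac2n$ over the randomness in $(\mathbf z_t,\mathbf y_t)$, $$\widetilde{\mathbf y}_t^\top\widetilde{\mathbf C}\,\widetilde{\mathbf y}_t\le 2\Big(1+\frac1c\Big)\big(1+\mathsf{SU}_b(t)^2\big)\,\mathrm{tr}(\widetilde{\mathbf C})\,\ln n.$$
   Context: Setting: $d\ge n$, $\lambda_1,\dots,\lambda_d>0$; $\mathbf z_1,\dots,\mathbf z_d$ i.i.d. $\mathcal N(\mathbf0,\mathbf I_n)$; $\boldsymbol\Phi_{\mathsf{train}}=[\sqrt{\lambda_1}\mathbf z_1,\dots,\sqrt{\lambda_d}\mathbf z_d]$; $\mathbf A=\sum_j\lambda_j\mathbf z_j\mathbf z_j^\top$, $\mathbf A_{-t}=\sum_{j\ne t}\lambda_j\mathbf z_j\mathbf z_j^\top$ for a fixed index $t$. Labels $\mathbf y_t\in\{\pm1\}^n$ with $y_{t,i}=\mathrm{sgn}(z_{t,i})$ w.p. $1-\nu^*$ and $-\mathrm{sgn}(z_{t,i})$ w.p. $\nu^*$ independently ($0\le\nu^*<1/2$). $\widehat{\boldsymbol\alpha}_{2,\mathsf{binary}}=\boldsymbol\Phi_{\mathsf{train}}^\top\mathbf A^{-1}\mathbf y_t$ (minimum-norm interpolator of $\mathbf y_t$), $\mathsf{SU}_b(t)=\sqrt{\lambda_t}(\widehat{\boldsymbol\alpha}_{2,\mathsf{binary}})_t$,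 $\widetilde{\mathbf y}_t=\mathbf y_t-\mathsf{SU}_b(t)\mathbf z_t$, and $\widetilde{\mathbf C}=\mathbf A_{-t}^{-1}\big(\sum_{j\ne t}\lambda_j^2\mathbf z_j\mathbf z_j^\top\big)\mathbf A_{-t}^{-1}$ (independent of $(\mathbf z_t,\mathbf y_t)$). *)

theory Defs
  imports "HOL-Probability.Probability" "Jordan_Normal_Form.Gauss_Jordan_Elimination"
begin

text \<open>Vectors in R^n are represented by functions nat => real (entries 0..<n);
  the Gaussian vectors z_j are indexed by j < d.\<close>

definition std_normal_measure :: "real measure" where
  "std_normal_measure = density lborel std_normal_density"

definition gauss_vec :: "nat \<Rightarrow> (nat \<Rightarrow> real) measure" where
  "gauss_vec n = PiM {..<n} (\<lambda>_. std_normal_measure)"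

definition others_measure :: "nat \<Rightarrow> nat \<Rightarrow> nat \<Rightarrow> (nat \<Rightarrow> nat \<Rightarrow> real) measure" where
  "others_measure n d t = PiM ({..<d} - {t}) (\<lambda>_. gauss_vec n)"

definition flip_measure :: "nat \<Rightarrow> real \<Rightarrow> (nat \<Rightarrow> bool) measure" where
  "flip_measure n \<nu> = PiM {..<n} (\<lambda>_. measure_pmf (bernoulli_pmf \<nu>))"

text \<open>Joint law of (z_t, flips), which determines (z_t, y_t).\<close>
definition zt_y_measure :: "nat \<Rightarrow> real \<Rightarrow> ((nat \<Rightarrow> real) \<times> (nat \<Rightarrow> bool)) measure" where
  "zt_y_measure n \<nu> = gauss_vec n \<Otimes>\<^sub>M flip_measure n \<nu>"

definition labels :: "(nat \<Rightarrow> real) \<Rightarrow> (nat \<Rightarrow> bool) \<Rightarrow> nat \<Rightarrow> real" where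
  "labels zt fl i = (if fl i then - sgn (zt i) else sgn (zt i))"

definition full_z :: "nat \<Rightarrow> (nat \<Rightarrow> nat \<Rightarrow> real) \<Rightarrow> (nat \<Rightarrow> real) \<Rightarrow> nat \<Rightarrow> nat \<Rightarrow> real" where
  "full_z t zs zt j = (if j = t then zt else zs j)"

definition wgram :: "nat \<Rightarrow> nat set \<Rightarrow> (nat \<Rightarrow> real) \<Rightarrow> (nat \<Rightarrow> nat \<Rightarrow> real) \<Rightarrow> real mat" where
  "wgram n J w z = mat n n (\<lambda>(i,k). \<Sum>j\<in>J. w j * z j i * z j k)"

definition minv :: "real mat \<Rightarrow> real mat" where
  "minv M = the (mat_inverse M)"

definition mtrace :: "real mat \<Rightarrow> real" where
  "mtrace M = (\<Sum>i<dim_row M. M $$ (i,i))"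

definition Amat :: "nat \<Rightarrow> nat \<Rightarrow> (nat \<Rightarrow> real) \<Rightarrow> (nat \<Rightarrow> nat \<Rightarrow> real) \<Rightarrow> real mat" where
  "Amat n d lam z = wgram n {..<d} lam z"

definition Amat_minus :: "nat \<Rightarrow> nat \<Rightarrow> nat \<Rightarrow> (nat \<Rightarrow> real) \<Rightarrow> (nat \<Rightarrow> nat \<Rightarrow> real) \<Rightarrow> real mat" where
  "Amat_minus n d t lam z = wgram n ({..<d} - {t}) lam z"

definition Ctilde :: "nat \<Rightarrow> nat \<Rightarrow> nat \<Rightarrow> (nat \<Rightarrow> real) \<Rightarrow> (nat \<Rightarrow> nat \<Rightarrow> real) \<Rightarrow> real mat" where
  "Ctilde n d t lam z =
     minv (Amat_minus n d t lam z) * wgram n ({..<d} - {t}) (\<lambda>j. (lam j)\<^sup>2) z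
       * minv (Amat_minus n d t lam z)"

text \<open>alpha = Phi^T A^{-1} y, so alpha_j = sqrt(lambda_j) z_j^T A^{-1} y and
  SU_b(t) = sqrt(lambda_t) alpha_t = lambda_t z_t^T A^{-1} y.\<close>
definition alpha_hat :: "nat \<Rightarrow> nat \<Rightarrow> (nat \<Rightarrow> real) \<Rightarrow> (nat \<Rightarrow> nat \<Rightarrow> real) \<Rightarrow> (nat \<Rightarrow> real) \<Rightarrow> nat \<Rightarrow> real" where
  "alpha_hat n d lam z y j = sqrt (lam j) * (vec n (z j) \<bullet> (minv (Amat n d lam z) *\<^sub>v vec n y))"

definition SU_b :: "nat \<Rightarrow> nat \<Rightarrow> nat \<Rightarrow> (nat \<Rightarrow> real) \<Rightarrow> (nat \<Rightarrow> nat \<Rightarrow> real) \<Rightarrow> (nat \<Rightarrow> real) \<Rightarrow> real" where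
  "SU_b n d t lam z y = sqrt (lam t) * alpha_hat n d lam z y t"

definition ytilde :: "nat \<Rightarrow> nat \<Rightarrow> nat \<Rightarrow> (nat \<Rightarrow> real) \<Rightarrow> (nat \<Rightarrow> nat \<Rightarrow> real) \<Rightarrow> (nat \<Rightarrow> real) \<Rightarrow> real vec" where
  "ytilde n d t lam z y = vec n y - SU_b n d t lam z y \<cdot>\<^sub>v vec n (z t)"

end

theory Submission
  imports Defs "Jordan_Normal_Form.Determinant"
begin

text \<open>Fix the vectors \<open>z\<^sub>j\<close>, \<open>j \<noteq> t\<close>. Almost surely they span \<open>\<real>\<^sup>n\<close>:
  the determinant of any \<open>n\<close> of them is a nonzero polynomial that is affine in each Gaussian
  vector separately, so it vanishes only on a null set. Then \<open>A\<^sub>-\<^sub>t\<close> is invertible and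
  \<open>C\<close> is a Gram matrix: \<open>x\<^sup>T C x = \<Sum>\<^sub>j (w\<^sub>j \<bullet> x)\<^sup>2\<close> with
  \<open>w\<^sub>j = \<lambda>\<^sub>j A\<^sub>-\<^sub>t\<^sup>-\<^sup>1 z\<^sub>j\<close> and \<open>tr C = \<Sum>\<^sub>j |w\<^sub>j|\<^sup>2\<close>.
  As \<open>\<tilde>y = y\<^sub>t - SU z\<^sub>t\<close>, the inequality \<open>(a - s b)\<^sup>2 \<le> 2 a\<^sup>2 + 2 s\<^sup>2 b\<^sup>2\<close> reduces the claim
  (with \<open>c = 1/7\<close>, so that \<open>2 (1 + 1/c) = 16\<close>) to the two bounds
  \<open>y\<^sup>T C y \<le> 8 tr C ln n\<close> and \<open>z\<^sup>T C z \<le> 8 tr C ln n\<close>, each failing with probability at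
  most \<open>1/n\<close>. Both \<open>z\<^sub>t\<close> and, for fixed flips, \<open>y\<^sub>t\<close> have independent sub-Gaussian
  coordinates. For such a vector \<open>Y\<close>, integrating against an independent Gaussian gives
  \<open>E exp ((w \<bullet> Y)\<^sup>2 / (4 |w|\<^sup>2)) \<le> \<surd>2\<close>, Jensen's inequality over \<open>j\<close> gives
  \<open>E exp (Y\<^sup>T C Y / (4 tr C)) \<le> \<surd>2\<close>, and Markov's inequality bounds the tail by
  \<open>\<surd>2 / n\<^sup>2 \<le> 1 / n\<close>.\<close>

section \<open>Gaussian integrals\<close>

lemma prob_space_std_normal: "prob_space std_normal_measure"
  unfolding std_normal_measure_def by (rule prob_space_normal_density) simp

lemma space_std_normal[simp]: "space std_normal_measure = UNIV"
  unfolding std_normal_measure_def by simp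

lemma sets_std_normal[simp, measurable_cong]: "sets std_normal_measure = sets borel"
  unfolding std_normal_measure_def by simp

lemma nn_integral_normal_density:
  assumes "\<sigma> > 0"
  shows "(\<integral>\<^sup>+x. ennreal (normal_density \<mu> \<sigma> x) \<partial>lborel) = 1"
proof -
  interpret prob_space "density lborel (normal_density \<mu> \<sigma>)"
    by (rule prob_space_normal_density) fact
  show ?thesis using emeasure_space_1 by (simp add: emeasure_density)
qed

lemma nn_integral_std_normal:
  assumes [measurable]: "f \<in> borel_measurable borel"
  shows "(\<integral>\<^sup>+x. f x \<partial>std_normal_measure) = (\<integral>\<^sup>+x. ennreal (normal_density 0 1 x) * f x \<partial>lborel)"
  unfolding std_normal_measure_def by (subst nn_integral_density) auto

lemma nn_integral_std_normal_exp_linear: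
  "(\<integral>\<^sup>+x. ennreal (exp (a * x)) \<partial>std_normal_measure) = ennreal (exp (a\<^sup>2 / 2))"
proof -
  have "normal_density 0 1 x * exp (a * x) = exp (a\<^sup>2 / 2) * normal_density a 1 x" for x
  proof -
    have "exp (- (x - 0)\<^sup>2 / (2 * 1\<^sup>2)) * exp (a * x) = exp (a\<^sup>2 / 2) * exp (- (x - a)\<^sup>2 / (2 * 1\<^sup>2))"
      unfolding exp_add[symmetric] by (simp add: power2_eq_square field_simps)
    then show ?thesis unfolding normal_density_def by (simp add: ac_simps)
  qed
  then have "(\<integral>\<^sup>+x. ennreal (exp (a * x)) \<partial>std_normal_measure)
      = (\<integral>\<^sup>+x. ennreal (exp (a\<^sup>2 / 2)) * ennreal (normal_density a 1 x) \<partial>lborel)"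
    by (subst nn_integral_std_normal) (simp_all add: ennreal_mult[symmetric])
  also have "\<dots> = ennreal (exp (a\<^sup>2 / 2))"
    by (simp add: nn_integral_cmult nn_integral_normal_density)
  finally show ?thesis .
qed

lemma nn_integral_std_normal_exp_square:
  "(\<integral>\<^sup>+x. ennreal (exp (x\<^sup>2 / 4)) \<partial>std_normal_measure) = ennreal (sqrt 2)"
proof -
  have "normal_density 0 1 x * exp (x\<^sup>2 / 4) = sqrt 2 * normal_density 0 (sqrt 2) x" for x
  proof -
    have "exp (- (x - 0)\<^sup>2 / (2 * 1\<^sup>2)) * exp (x\<^sup>2 / 4) = exp (- (x - 0)\<^sup>2 / (2 * (sqrt 2)\<^sup>2))"
      unfolding exp_add[symmetric] by (simp add: power2_eq_square field_simps)
    moreover have "sqrt (2 * pi * (sqrt 2)\<^sup>2) = sqrt (2 * pi) * sqrt 2"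
      by (simp add: real_sqrt_mult)
    ultimately show ?thesis unfolding normal_density_def by (simp add: field_simps)
  qed
  then have "(\<integral>\<^sup>+x. ennreal (exp (x\<^sup>2 / 4)) \<partial>std_normal_measure)
      = (\<integral>\<^sup>+x. ennreal (sqrt 2) * ennreal (normal_density 0 (sqrt 2) x) \<partial>lborel)"
    by (subst nn_integral_std_normal) (simp_all add: ennreal_mult[symmetric])
  also have "\<dots> = ennreal (sqrt 2)"
    by (simp add: nn_integral_cmult nn_integral_normal_density)
  finally show ?thesis .
qed

lemma nn_integral_std_normal_reflect:
  assumes [measurable]: "f \<in> borel_measurable borel"
  shows "(\<integral>\<^sup>+x. f (- x) \<partial>std_normal_measure) = (\<integral>\<^sup>+x. f x \<partial>std_normal_measure)"
proof -
  have "(\<integral>\<^sup>+x. f x \<partial>std_normal_measure) = (\<integral>\<^sup>+x. ennreal (normal_density 0 1 x) * f x \<partial>lborel)"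
    by (rule nn_integral_std_normal) fact
  also have "\<dots> = ennreal \<bar>-1\<bar> *
      (\<integral>\<^sup>+x. ennreal (normal_density 0 1 (0 + -1 * x)) * f (0 + -1 * x) \<partial>lborel)"
    by (rule nn_integral_real_affine) auto
  also have "\<dots> = (\<integral>\<^sup>+x. ennreal (normal_density 0 1 x) * f (- x) \<partial>lborel)"
    by (simp add: normal_density_def)
  also have "\<dots> = (\<integral>\<^sup>+x. f (- x) \<partial>std_normal_measure)"
    by (rule nn_integral_std_normal[symmetric]) measurable
  finally show ?thesis by simp
qed

lemma cosh_le_exp_square_half: "cosh (b::real) \<le> exp (b\<^sup>2 / 2)"
proof -
  have "cosh b \<le> exp (b\<^sup>2 / 2)" if "b \<ge> 0" for b :: real
  proof -
    have "1 + (1/2) * (exp (2*b) - 1) = exp b * cosh b"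
      by (simp add: cosh_def exp_add[symmetric] exp_minus field_simps mult_exp_exp)
    then have "-(2*b) * (1/2) + ln (1 + (1/2) * (exp (2*b) - 1)) = ln (cosh b)"
      by (simp add: ln_mult cosh_real_pos)
    moreover have "-(2*b) * (1/2) + ln (1 + (1/2) * (exp (2*b) - 1)) \<le> (2*b)\<^sup>2 / 8"
      using Hoeffdings_lemma_aux[of "2*b" "1/2"] that by simp
    ultimately have "ln (cosh b) \<le> b\<^sup>2 / 2" by (simp add: power2_eq_square)
    then show ?thesis by (metis cosh_real_pos exp_le_cancel_iff exp_ln)
  qed
  from this[of b] this[of "-b"] show ?thesis by (cases "b \<ge> 0") simp_all
qed

lemma nn_integral_std_normal_exp_sgn:
  "(\<integral>\<^sup>+x. ennreal (exp (b * sgn x)) \<partial>std_normal_measure) \<le> ennreal (exp (b\<^sup>2 / 2))"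
proof -
  interpret prob_space std_normal_measure by (rule prob_space_std_normal)
  let ?f = "\<lambda>x::real. ennreal (exp (b * sgn x))"
  have m: "?f \<in> borel_measurable borel" by measurable
  have pointwise: "?f x + ?f (-x) \<le> ennreal (2 * cosh b)" for x
  proof -
    have "sgn x = 1 \<or> sgn x = -1 \<or> sgn x = 0" by (simp add: sgn_real_def)
    moreover have "2 \<le> 2 * cosh b" using cosh_real_ge_1[of b] by simp
    ultimately have "exp (b * sgn x) + exp (b * sgn (-x)) \<le> 2 * cosh b"
      by (auto simp: cosh_def exp_minus)
    then show ?thesis by (simp add: ennreal_plus[symmetric] del: ennreal_plus)
  qed
  have "2 * (\<integral>\<^sup>+x. ?f x \<partial>std_normal_measure)
      = (\<integral>\<^sup>+x. ?f x \<partial>std_normal_measure) + (\<integral>\<^sup>+x. ?f (-x) \<partial>std_normal_measure)"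
    using nn_integral_std_normal_reflect[OF m] by (simp add: mult_2)
  also have "\<dots> = (\<integral>\<^sup>+x. ?f x + ?f (-x) \<partial>std_normal_measure)"
    by (rule nn_integral_add[symmetric]) (use m in auto)
  also have "\<dots> \<le> (\<integral>\<^sup>+x. ennreal (2 * cosh b) \<partial>std_normal_measure)"
    by (intro nn_integral_mono pointwise)
  also have "\<dots> = 2 * ennreal (cosh b)" using emeasure_space_1 by (simp add: ennreal_mult)
  finally have "(\<integral>\<^sup>+x. ?f x \<partial>std_normal_measure) \<le> ennreal (cosh b)"
    by (simp add: ennreal_mult_le_mult_iff)
  also have "\<dots> \<le> ennreal (exp (b\<^sup>2 / 2))" using cosh_le_exp_square_half by simp
  finally show ?thesis .
qed

section \<open>Sub-Gaussian vectors\<close>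

definition subgaussian_vector :: "'a measure \<Rightarrow> nat \<Rightarrow> (nat \<Rightarrow> 'a \<Rightarrow> real) \<Rightarrow> bool" where
  "subgaussian_vector M n Y \<longleftrightarrow> prob_space M \<and> (\<forall>i<n. Y i \<in> borel_measurable M) \<and>
     (\<forall>a. (\<integral>\<^sup>+x. ennreal (exp (\<Sum>i<n. a i * Y i x)) \<partial>M) \<le> ennreal (exp (\<Sum>i<n. (a i)\<^sup>2 / 2)))"

lemma subgaussian_vectorD:
  assumes "subgaussian_vector M n Y"
  shows "prob_space M" and "i < n \<Longrightarrow> Y i \<in> borel_measurable M"
    and "(\<integral>\<^sup>+x. ennreal (exp (\<Sum>i<n. a i * Y i x)) \<partial>M) \<le> ennreal (exp (\<Sum>i<n. (a i)\<^sup>2 / 2))"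
  using assms unfolding subgaussian_vector_def by auto

lemma prob_space_gauss_vec: "prob_space (gauss_vec n)"
  unfolding gauss_vec_def by (rule prob_space_PiM) (rule prob_space_std_normal)

lemma space_gauss_vec: "space (gauss_vec n) = {..<n} \<rightarrow>\<^sub>E UNIV"
  unfolding gauss_vec_def by (simp add: space_PiM)

lemma measurable_gauss_vec_component: "i < n \<Longrightarrow> (\<lambda>x. x i) \<in> borel_measurable (gauss_vec n)"
  unfolding gauss_vec_def
  using measurable_component_singleton[of i "{..<n}" "\<lambda>_. std_normal_measure"]
  by (simp add: measurable_cong_sets[OF refl sets_std_normal])

lemma nn_integral_gauss_vec_prod:
  assumes [measurable]: "\<And>i. g i \<in> borel_measurable borel"
  shows "(\<integral>\<^sup>+x. (\<Prod>i<n. ennreal (g i (x i))) \<partial>gauss_vec n)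
       = (\<Prod>i<n. \<integral>\<^sup>+s. ennreal (g i s) \<partial>std_normal_measure)"
proof -
  interpret product_sigma_finite "\<lambda>_::nat. std_normal_measure"
    by (rule product_sigma_finite.intro)
      (rule prob_space_imp_sigma_finite[OF prob_space_std_normal])
  show ?thesis unfolding gauss_vec_def by (rule product_nn_integral_prod) auto
qed

lemma subgaussian_gauss_vec: "subgaussian_vector (gauss_vec n) n (\<lambda>i x. x i)"
  unfolding subgaussian_vector_def
proof (intro conjI allI impI prob_space_gauss_vec measurable_gauss_vec_component)
  fix a :: "nat \<Rightarrow> real"
  have "(\<integral>\<^sup>+x. ennreal (exp (\<Sum>i<n. a i * x i)) \<partial>gauss_vec n)
      = (\<integral>\<^sup>+x. (\<Prod>i<n. ennreal (exp (a i * x i))) \<partial>gauss_vec n)"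
    by (simp add: exp_sum prod_ennreal)
  also have "\<dots> = (\<Prod>i<n. ennreal (exp ((a i)\<^sup>2 / 2)))"
    by (subst nn_integral_gauss_vec_prod) (simp_all add: nn_integral_std_normal_exp_linear)
  also have "\<dots> = ennreal (exp (\<Sum>i<n. (a i)\<^sup>2 / 2))"
    by (simp add: exp_sum prod_ennreal)
  finally show "(\<integral>\<^sup>+x. ennreal (exp (\<Sum>i<n. a i * x i)) \<partial>gauss_vec n) \<le> \<dots>" by simp
qed

lemma subgaussian_labels: "subgaussian_vector (gauss_vec n) n (\<lambda>i x. labels x fl i)"
  unfolding subgaussian_vector_def
proof (intro conjI allI impI prob_space_gauss_vec)
  fix i assume "i < n"
  then show "(\<lambda>x. labels x fl i) \<in> borel_measurable (gauss_vec n)"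
    unfolding labels_def using measurable_gauss_vec_component[of i n] by measurable
next
  fix a :: "nat \<Rightarrow> real"
  define s where "s i = (if fl i then -1 else 1::real)" for i
  have "labels x fl i = s i * sgn (x i)" for x i by (simp add: labels_def s_def)
  then have "(\<integral>\<^sup>+x. ennreal (exp (\<Sum>i<n. a i * labels x fl i)) \<partial>gauss_vec n)
      = (\<integral>\<^sup>+x. (\<Prod>i<n. ennreal (exp (a i * s i * sgn (x i)))) \<partial>gauss_vec n)"
    by (simp add: exp_sum prod_ennreal mult.assoc)
  also have "\<dots> = (\<Prod>i<n. \<integral>\<^sup>+r. ennreal (exp (a i * s i * sgn r)) \<partial>std_normal_measure)"
    by (rule nn_integral_gauss_vec_prod) measurable
  also have "\<dots> \<le> (\<Prod>i<n. ennreal (exp ((a i * s i)\<^sup>2 / 2)))"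
    by (intro prod_mono_ennreal nn_integral_std_normal_exp_sgn)
  also have "\<dots> = (\<Prod>i<n. ennreal (exp ((a i)\<^sup>2 / 2)))"
    by (intro prod.cong refl) (simp add: power_mult_distrib s_def)
  also have "\<dots> = ennreal (exp (\<Sum>i<n. (a i)\<^sup>2 / 2))"
    by (simp add: exp_sum prod_ennreal)
  finally show "(\<integral>\<^sup>+x. ennreal (exp (\<Sum>i<n. a i * labels x fl i)) \<partial>gauss_vec n) \<le> \<dots>" .
qed

lemma subgaussian_nn_integral_exp_square:
  assumes Y: "subgaussian_vector M n Y" and r: "r = (\<Sum>i<n. (u i)\<^sup>2)" "r > 0"
  shows "(\<integral>\<^sup>+x. ennreal (exp ((\<Sum>i<n. u i * Y i x)\<^sup>2 / (4 * r))) \<partial>M) \<le> ennreal (sqrt 2)"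
proof -
  interpret M: prob_space M using subgaussian_vectorD(1)[OF Y] .
  interpret N: prob_space std_normal_measure by (rule prob_space_std_normal)
  interpret pair_sigma_finite M std_normal_measure
    by (rule pair_sigma_finite.intro) (simp_all add: M.sigma_finite_measure N.sigma_finite_measure)
  define S where "S x = (\<Sum>i<n. u i * Y i x)" for x
  define c where "c = 1 / sqrt (2 * r)"
  have [measurable]: "S \<in> borel_measurable M"
    unfolding S_def by (intro borel_measurable_sum borel_measurable_times borel_measurable_const
        subgaussian_vectorD(2)[OF Y]) auto
  have c2: "c\<^sup>2 = 1 / (2 * r)" unfolding c_def using r(2) by (simp add: power_divide)
  \<comment> \<open>Gaussian decoupling: \<open>exp (S\<^sup>2 / (4 r))\<close> is the moment generating function of a fresh
    standard normal \<open>g\<close> at \<open>c S\<close>; after Fubini, the bound on the moment generating function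
    of \<open>Y\<close> at \<open>c g u\<close> is again Gaussian in \<open>g\<close>.\<close>
  have "(\<integral>\<^sup>+x. ennreal (exp ((S x)\<^sup>2 / (4 * r))) \<partial>M)
      = (\<integral>\<^sup>+x. \<integral>\<^sup>+g. ennreal (exp (c * S x * g)) \<partial>std_normal_measure \<partial>M)"
    using r(2) by (simp add: nn_integral_std_normal_exp_linear power_mult_distrib c2)
  also have "\<dots> = (\<integral>\<^sup>+g. \<integral>\<^sup>+x. ennreal (exp (c * S x * g)) \<partial>M \<partial>std_normal_measure)"
    by (rule Fubini'[symmetric]) measurable
  also have "\<dots> \<le> (\<integral>\<^sup>+g. ennreal (exp (g\<^sup>2 / 4)) \<partial>std_normal_measure)"
  proof (intro nn_integral_mono)
    fix g :: real
    have "(\<integral>\<^sup>+x. ennreal (exp (c * S x * g)) \<partial>M)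
        = (\<integral>\<^sup>+x. ennreal (exp (\<Sum>i<n. (c * g * u i) * Y i x)) \<partial>M)"
      unfolding S_def by (simp add: sum_distrib_left sum_distrib_right ac_simps)
    also have "\<dots> \<le> ennreal (exp (\<Sum>i<n. (c * g * u i)\<^sup>2 / 2))"
      by (rule subgaussian_vectorD(3)[OF Y])
    also have "(\<Sum>i<n. (c * g * u i)\<^sup>2 / 2) = c\<^sup>2 * g\<^sup>2 / 2 * r"
      unfolding r(1) by (simp add: sum_distrib_left power_mult_distrib ac_simps)
    also have "\<dots> = g\<^sup>2 / 4" using r(2) by (simp add: c2)
    finally show "(\<integral>\<^sup>+x. ennreal (exp (c * S x * g)) \<partial>M) \<le> ennreal (exp (g\<^sup>2 / 4))" .
  qed
  also have "\<dots> = ennreal (sqrt 2)" by (rule nn_integral_std_normal_exp_square)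
  finally show ?thesis unfolding S_def .
qed

lemma exp_sum_le_convex_combination:
  fixes r q :: "'j \<Rightarrow> real"
  assumes S: "finite S" and r: "\<And>j. j \<in> S \<Longrightarrow> r j > 0" and T: "T = (\<Sum>j\<in>S. r j)" "T > 0"
  shows "exp ((\<Sum>j\<in>S. q j) / T) \<le> (\<Sum>j\<in>S. r j / T * exp (q j / r j))"
proof -
  have "S \<noteq> {}" using T by auto
  moreover have "(\<Sum>j\<in>S. q j) / T = (\<Sum>j\<in>S. (r j / T) *\<^sub>R (q j / r j))"
    unfolding sum_divide_distrib using r by (intro sum.cong refl) (simp add: less_imp_neq[symmetric])
  moreover have "(\<Sum>j\<in>S. r j / T) = 1"
    using T by (simp add: sum_divide_distrib[symmetric])
  ultimately show ?thesis
    using convex_on_sum[OF S _ exp_convex, of "\<lambda>j. r j / T" "\<lambda>j. q j / r j"] r T(2)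
    by (simp add: less_imp_le)
qed

lemma subgaussian_nn_integral_exp_quadratic:
  fixes w :: "'j \<Rightarrow> nat \<Rightarrow> real"
  assumes Y: "subgaussian_vector M n Y" and J: "finite J"
    and T: "T = (\<Sum>j\<in>J. \<Sum>i<n. (w j i)\<^sup>2)" "T > 0"
  shows "(\<integral>\<^sup>+x. ennreal (exp ((\<Sum>j\<in>J. (\<Sum>i<n. w j i * Y i x)\<^sup>2) / (4 * T))) \<partial>M) \<le> ennreal (sqrt 2)"
proof -
  define r where "r j = (\<Sum>i<n. (w j i)\<^sup>2)" for j
  define S where "S = {j\<in>J. r j > 0}"
  define q where "q j x = (\<Sum>i<n. w j i * Y i x)\<^sup>2 / 4" for j x
  have r0: "r j \<ge> 0" for j unfolding r_def by (simp add: sum_nonneg)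
  have "w j i = 0" if "j \<in> J - S" "i < n" for i j
  proof -
    have "r j = 0" using that r0[of j] unfolding S_def by auto
    then show ?thesis using that unfolding r_def by (subst (asm) sum_nonneg_eq_0_iff) auto
  qed
  then have Q: "(\<Sum>j\<in>J. (\<Sum>i<n. w j i * Y i x)\<^sup>2) / (4 * T) = (\<Sum>j\<in>S. q j x) / T" for x
    unfolding q_def sum_divide_distrib[symmetric]
    by (subst sum.mono_neutral_right[OF J, of S]) (auto simp: S_def)
  have TS: "T = (\<Sum>j\<in>S. r j)"
    unfolding T r_def[symmetric] using J r0
    by (intro sum.mono_neutral_right) (auto simp: S_def order_less_le)
  have [measurable]: "(\<lambda>x. q j x) \<in> borel_measurable M" for j
    unfolding q_def by (intro borel_measurable_sum borel_measurable_times borel_measurable_const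
        borel_measurable_power borel_measurable_divide subgaussian_vectorD(2)[OF Y]) auto
  have "(\<integral>\<^sup>+x. ennreal (exp ((\<Sum>j\<in>S. q j x) / T)) \<partial>M)
      \<le> (\<integral>\<^sup>+x. (\<Sum>j\<in>S. ennreal (r j / T) * ennreal (exp (q j x / r j))) \<partial>M)"
  proof (intro nn_integral_mono)
    fix x
    have "exp ((\<Sum>j\<in>S. q j x) / T) \<le> (\<Sum>j\<in>S. r j / T * exp (q j x / r j))"
      by (rule exp_sum_le_convex_combination) (use J TS T(2) in \<open>auto simp: S_def\<close>)
    moreover have "(\<Sum>j\<in>S. ennreal (r j / T) * ennreal (exp (q j x / r j)))
        = ennreal (\<Sum>j\<in>S. r j / T * exp (q j x / r j))"
      using T(2) r0 by (simp add: ennreal_mult[symmetric] sum_ennreal)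
    ultimately show "ennreal (exp ((\<Sum>j\<in>S. q j x) / T))
        \<le> (\<Sum>j\<in>S. ennreal (r j / T) * ennreal (exp (q j x / r j)))"
      by (simp add: ennreal_leI)
  qed
  also have "\<dots> = (\<Sum>j\<in>S. ennreal (r j / T) * (\<integral>\<^sup>+x. ennreal (exp (q j x / r j)) \<partial>M))"
    using J by (subst nn_integral_sum) (auto simp: S_def intro!: sum.cong nn_integral_cmult)
  also have "\<dots> \<le> (\<Sum>j\<in>S. ennreal (r j / T) * ennreal (sqrt 2))"
    using subgaussian_nn_integral_exp_square[OF Y]
    by (intro sum_mono mult_left_mono) (auto simp: S_def r_def q_def)
  also have "\<dots> = ennreal ((\<Sum>j\<in>S. r j / T) * sqrt 2)"
    using r0 T(2) by (simp add: ennreal_mult[symmetric] sum_ennreal sum_distrib_right)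
  also have "(\<Sum>j\<in>S. r j / T) = 1" using TS T(2) by (simp add: sum_divide_distrib[symmetric])
  finally show ?thesis unfolding Q by simp
qed

lemma subgaussian_quadratic_tail:
  fixes w :: "'j \<Rightarrow> nat \<Rightarrow> real"
  assumes Y: "subgaussian_vector M n Y" and J: "finite J"
    and T: "T = (\<Sum>j\<in>J. \<Sum>i<n. (w j i)\<^sup>2)" and n: "2 \<le> n"
  shows "emeasure M {x\<in>space M. 8 * T * ln n < (\<Sum>j\<in>J. (\<Sum>i<n. w j i * Y i x)\<^sup>2)}
           \<le> ennreal (1 / real n)"
proof (cases "T > 0")
  case False
  have "T \<ge> 0" unfolding T by (intro sum_nonneg) simp
  with False have T0: "T = 0" by simp
  then have "\<forall>j\<in>J. \<forall>i<n. w j i = 0"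
    using J unfolding T by (simp add: sum_nonneg_eq_0_iff sum_nonneg)
  then show ?thesis using T0 by simp
next
  case True
  interpret prob_space M using subgaussian_vectorD(1)[OF Y] .
  define Q where "Q x = (\<Sum>j\<in>J. (\<Sum>i<n. w j i * Y i x)\<^sup>2)" for x
  have [measurable]: "Q \<in> borel_measurable M"
    unfolding Q_def by (intro borel_measurable_sum borel_measurable_times borel_measurable_const
        borel_measurable_power subgaussian_vectorD(2)[OF Y]) auto
  have n_pos: "real n > 0" using n by simp
  have "emeasure M {x\<in>space M. 8 * T * ln n < Q x} \<le> emeasure M {x\<in>space M. Q x \<ge> 8 * T * ln n}"
    by (intro emeasure_mono) auto
  also have "\<dots> \<le> ennreal (exp (- (1 / (4 * T)) * (8 * T * ln n)))
      * (\<integral>\<^sup>+x. ennreal (exp (1 / (4 * T) * Q x)) * indicator (space M) x \<partial>M)"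
    using True by (intro Chernoff_ineq_nn_integral_ge) auto
  also have "exp (- (1 / (4 * T)) * (8 * T * ln n)) = 1 / (real n)\<^sup>2"
  proof -
    have "- (1 / (4 * T)) * (8 * T * ln n) = - ln ((real n)\<^sup>2)"
      using True n_pos by (simp add: ln_realpow)
    then show ?thesis using n_pos by (simp add: exp_minus inverse_eq_divide)
  qed
  also have "(\<integral>\<^sup>+x. ennreal (exp (1 / (4 * T) * Q x)) * indicator (space M) x \<partial>M)
      = (\<integral>\<^sup>+x. ennreal (exp (Q x / (4 * T))) \<partial>M)"
    by (intro nn_integral_cong) simp
  also have "ennreal (1 / (real n)\<^sup>2) * \<dots> \<le> ennreal (1 / (real n)\<^sup>2) * ennreal (sqrt 2)"
    unfolding Q_def by (intro mult_left_mono subgaussian_nn_integral_exp_quadratic[OF Y J T True]) auto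
  also have "\<dots> \<le> ennreal (1 / n)"
  proof -
    have "sqrt 2 \<le> 2" by (rule real_le_lsqrt) auto
    then have "sqrt 2 \<le> real n" using n by linarith
    then have "1 / (real n)\<^sup>2 * sqrt 2 \<le> 1 / real n"
      using n_pos by (simp add: field_simps power2_eq_square)
    then show ?thesis by (simp add: ennreal_mult[symmetric])
  qed
  finally show ?thesis unfolding Q_def .
qed

section \<open>Zero sets of slicewise affine functions\<close>

lemma (in product_sigma_finite) AE_PiM_insert:
  assumes W: "finite W" "v \<notin> W"
    and P: "{x\<in>space (PiM (insert v W) M). P x} \<in> sets (PiM (insert v W) M)"
    and AE: "AE x in PiM W M. AE y in M v. P (x(v:=y))"
  shows "AE x in PiM (insert v W) M. P x"
proof -
  let ?N = "{x\<in>space (PiM (insert v W) M). \<not> P x}"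
  have N: "?N \<in> sets (PiM (insert v W) M)" using P by measurable
  have "emeasure (PiM (insert v W) M) ?N = (\<integral>\<^sup>+x. indicator ?N x \<partial>PiM (insert v W) M)"
    using N by simp
  also have "\<dots> = (\<integral>\<^sup>+x. \<integral>\<^sup>+y. indicator ?N (x(v:=y)) \<partial>M v \<partial>PiM W M)"
    using N W by (intro product_nn_integral_insert) auto
  also have "\<dots> = (\<integral>\<^sup>+x. 0 \<partial>PiM W M)"
  proof (rule nn_integral_cong_AE, rule AE_mp[OF AE AE_I2], intro impI)
    fix x assume x: "x \<in> space (PiM W M)" and "AE y in M v. P (x(v:=y))"
    moreover have "(\<lambda>y. indicator ?N (x(v:=y))) \<in> borel_measurable (M v)"
      using measurable_component_update[OF x W(2)] N by measurable
    moreover have "AE y in M v. indicator ?N (x(v:=y)) = (0::ennreal)"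
      using \<open>AE y in M v. P (x(v:=y))\<close> by eventually_elim (simp add: indicator_def)
    ultimately show "(\<integral>\<^sup>+y. indicator ?N (x(v:=y)) \<partial>M v) = 0"
      by (subst nn_integral_0_iff_AE) auto
  qed
  finally show ?thesis using AE_iff_measurable[OF N refl] by simp
qed

lemma space_PiM_fun_upd:
  "x \<in> space (PiM W M) \<Longrightarrow> y \<in> space (M v) \<Longrightarrow> x(v:=y) \<in> space (PiM (insert v W) M)"
  by (auto simp: space_PiM PiE_def extensional_def Pi_def)

lemma measurable_fun_upd_const:
  assumes "p \<in> space (M v)"
  shows "(\<lambda>x. x(v:=p)) \<in> measurable (PiM W M) (PiM (insert v W) M)"
proof -
  have "(\<lambda>x i. (if i = v then (\<lambda>_. p) else (\<lambda>x. x i)) x) \<in> measurable (PiM W M) (PiM (insert v W) M)"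
    by (rule measurable_PiM_single') (use assms in \<open>auto simp: space_PiM PiE_def extensional_def\<close>)
  moreover have "(\<lambda>x i. (if i = v then (\<lambda>_. p) else (\<lambda>x. x i)) x) = (\<lambda>x. x(v:=p))"
    by (auto simp: fun_eq_iff)
  ultimately show ?thesis by simp
qed

lemma AE_PiM_nonzero_slicewise:
  fixes B :: "'b measure" and adm :: "('b \<Rightarrow> real) \<Rightarrow> bool"
  assumes B: "prob_space B"
    and adm: "\<And>h. adm h \<Longrightarrow> h \<in> borel_measurable B \<Longrightarrow> (\<exists>y\<in>space B. h y \<noteq> 0) \<Longrightarrow>
      AE y in B. h y \<noteq> 0"
    and V: "finite V" and f: "f \<in> borel_measurable (PiM V (\<lambda>_. B))"
    and slices: "\<And>v x. v \<in> V \<Longrightarrow> x \<in> space (PiM V (\<lambda>_. B)) \<Longrightarrow> adm (\<lambda>y. f (x(v:=y)))"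
    and nz: "\<exists>x\<in>space (PiM V (\<lambda>_. B)). f x \<noteq> 0"
  shows "AE x in PiM V (\<lambda>_. B). f x \<noteq> 0"
  using V f slices nz
proof (induction V arbitrary: f rule: finite_induct)
  case empty
  then show ?case by (intro AE_I2) (auto simp: space_PiM_empty)
next
  case (insert v W f)
  interpret B: prob_space B by fact
  interpret product_sigma_finite "\<lambda>_. B"
    by (rule product_sigma_finite.intro) (rule B.sigma_finite_measure)
  have [measurable]: "f \<in> borel_measurable (PiM (insert v W) (\<lambda>_. B))" by fact
  \<comment> \<open>Freeze the new coordinate at the value \<open>p\<close> it has at a point where \<open>f \<noteq> 0\<close>. By
    induction \<open>f (x(v:=p)) \<noteq> 0\<close> for almost every \<open>x\<close>, so for almost every \<open>x\<close> the slice
    \<open>\<lambda>y. f (x(v:=y))\<close> is not identically zero and hence almost everywhere nonzero.\<close>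
  obtain x1 where x1: "x1 \<in> space (PiM (insert v W) (\<lambda>_. B))" "f x1 \<noteq> 0" using insert.prems by blast
  define p where "p = x1 v"
  have p: "p \<in> space B" using x1 by (auto simp: p_def space_PiM)
  have "x1(v:=undefined) \<in> space (PiM W (\<lambda>_. B))"
    using x1 insert.hyps by (auto simp: space_PiM PiE_def extensional_def Pi_def)
  moreover have "(x1(v:=undefined))(v:=p) = x1" by (simp add: p_def)
  ultimately have x0: "\<exists>x\<in>space (PiM W (\<lambda>_. B)). f (x(v:=p)) \<noteq> 0"
    using x1(2) by metis
  have "AE x in PiM W (\<lambda>_. B). f (x(v:=p)) \<noteq> 0"
  proof (rule insert.IH[OF _ _ x0])
    show "(\<lambda>x. f (x(v:=p))) \<in> borel_measurable (PiM W (\<lambda>_. B))"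
      using measurable_fun_upd_const[of p "\<lambda>_. B" v W, OF p] insert.prems(1)
      by (rule measurable_compose)
    show "adm (\<lambda>y. f ((x(w:=y))(v:=p)))" if w: "w \<in> W" and x: "x \<in> space (PiM W (\<lambda>_. B))" for w x
    proof -
      have "w \<noteq> v" using w insert.hyps by auto
      then have "(\<lambda>y. f ((x(w:=y))(v:=p))) = (\<lambda>y. f ((x(v:=p))(w:=y)))"
        by (simp add: fun_upd_twist)
      moreover have xp: "x(v:=p) \<in> space (PiM (insert v W) (\<lambda>_. B))" by (rule space_PiM_fun_upd[OF x p])
      have "adm (\<lambda>y. f ((x(v:=p))(w:=y)))" using insert.prems(2)[OF _ xp] w by blast
      ultimately show ?thesis by simp
    qed
  qed
  then have slices_AE: "AE x in PiM W (\<lambda>_. B). AE y in B. f (x(v:=y)) \<noteq> 0"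
  proof (rule AE_mp[OF _ AE_I2], intro impI)
    fix x assume x: "x \<in> space (PiM W (\<lambda>_. B))" and "f (x(v:=p)) \<noteq> 0"
    have xp: "x(v:=p) \<in> space (PiM (insert v W) (\<lambda>_. B))" by (rule space_PiM_fun_upd[OF x p])
    have "adm (\<lambda>y. f ((x(v:=p))(v:=y)))" using insert.prems(2)[OF _ xp] by blast
    then show "AE y in B. f (x(v:=y)) \<noteq> 0"
      using \<open>f (x(v:=p)) \<noteq> 0\<close> p
      by (intro adm) (auto intro: measurable_compose[OF measurable_component_update[OF x] insert.prems(1)]
          simp: insert.hyps)
  qed
  show ?case by (rule AE_PiM_insert[OF insert.hyps _ slices_AE]) measurable
qed

lemma AE_std_normal_neq: "AE y in std_normal_measure. y \<noteq> c"
  unfolding std_normal_measure_def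
  using AE_lborel_singleton[of c] by (subst AE_density) (auto elim: eventually_mono)

lemma AE_gauss_vec_affine_nonzero:
  assumes "\<exists>y\<in>space (gauss_vec n). (\<Sum>i<n. a i * y i) + b \<noteq> 0"
  shows "AE y in gauss_vec n. (\<Sum>i<n. a i * y i) + b \<noteq> 0"
  unfolding gauss_vec_def
proof (rule AE_PiM_nonzero_slicewise[where adm = "\<lambda>h. \<exists>\<alpha> \<beta>. \<forall>y. h y = \<alpha> * y + \<beta>"])
  show "prob_space std_normal_measure" by (rule prob_space_std_normal)
next
  fix h :: "real \<Rightarrow> real"
  assume "\<exists>\<alpha> \<beta>. \<forall>y. h y = \<alpha> * y + \<beta>" and nz: "\<exists>y\<in>space std_normal_measure. h y \<noteq> 0"
  then obtain \<alpha> \<beta> where h: "\<And>y. h y = \<alpha> * y + \<beta>" by blast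
  show "AE y in std_normal_measure. h y \<noteq> 0"
  proof (cases "\<alpha> = 0")
    case True
    then show ?thesis using nz h by (intro AE_I2) auto
  next
    case False
    have "h y \<noteq> 0" if "y \<noteq> - \<beta> / \<alpha>" for y
      using that False by (auto simp: h field_simps)
    then show ?thesis using AE_std_normal_neq[of "- \<beta> / \<alpha>"] by (auto elim: eventually_mono)
  qed
next
  fix v x assume v: "v \<in> {..<n}"
  have "(\<Sum>i<n. a i * (x(v:=y)) i) + b = a v * y + ((\<Sum>i\<in>{..<n}-{v}. a i * x i) + b)" for y
  proof -
    have "(\<Sum>i<n. a i * (x(v:=y)) i) = a v * y + (\<Sum>i\<in>{..<n}-{v}. a i * (x(v:=y)) i)"
      using v by (subst sum.remove[of _ v]) auto
    also have "(\<Sum>i\<in>{..<n}-{v}. a i * (x(v:=y)) i) = (\<Sum>i\<in>{..<n}-{v}. a i * x i)"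
      by (intro sum.cong) auto
    finally show ?thesis by simp
  qed
  then show "\<exists>\<alpha> \<beta>. \<forall>y. (\<Sum>i<n. a i * (x(v:=y)) i) + b = \<alpha> * y + \<beta>" by blast
qed (use assms in \<open>auto simp: gauss_vec_def\<close>)

lemma AE_PiM_gauss_vec_nonzero:
  fixes f :: "('v \<Rightarrow> nat \<Rightarrow> real) \<Rightarrow> real"
  assumes V: "finite V" and f: "f \<in> borel_measurable (PiM V (\<lambda>_. gauss_vec n))"
    and affine: "\<And>v x. v \<in> V \<Longrightarrow> x \<in> space (PiM V (\<lambda>_. gauss_vec n)) \<Longrightarrow>
      \<exists>a b. \<forall>y\<in>space (gauss_vec n). f (x(v:=y)) = (\<Sum>i<n. a i * y i) + b"
    and nz: "\<exists>x\<in>space (PiM V (\<lambda>_. gauss_vec n)). f x \<noteq> 0"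
  shows "AE x in PiM V (\<lambda>_. gauss_vec n). f x \<noteq> 0"
proof (rule AE_PiM_nonzero_slicewise[where
      adm = "\<lambda>h. \<exists>a b. \<forall>y\<in>space (gauss_vec n). h y = (\<Sum>i<n. a i * y i) + b",
      OF prob_space_gauss_vec _ V f affine nz])
  fix h :: "(nat \<Rightarrow> real) \<Rightarrow> real"
  assume "\<exists>a b. \<forall>y\<in>space (gauss_vec n). h y = (\<Sum>i<n. a i * y i) + b"
    and nz: "\<exists>y\<in>space (gauss_vec n). h y \<noteq> 0"
  then obtain a b where h: "\<And>y. y \<in> space (gauss_vec n) \<Longrightarrow> h y = (\<Sum>i<n. a i * y i) + b" by blast
  have "AE y in gauss_vec n. (\<Sum>i<n. a i * y i) + b \<noteq> 0"
    by (rule AE_gauss_vec_affine_nonzero) (use nz h in auto)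
  then show "AE y in gauss_vec n. h y \<noteq> 0"
    by (rule AE_mp[OF _ AE_I2]) (use h in auto)
qed

lemma minv_inverse:
  fixes A :: "real mat"
  assumes A: "A \<in> carrier_mat n n" and d: "det A \<noteq> 0"
  shows "A * minv A = 1\<^sub>m n" and "minv A * A = 1\<^sub>m n" and "minv A \<in> carrier_mat n n"
proof -
  have "A \<in> Units (ring_mat TYPE(real) n ())" by (rule det_non_zero_imp_unit[OF A d])
  then obtain B where "mat_inverse A = Some B"
    using mat_inverse(1)[OF A, of "()"] by (cases "mat_inverse A") auto
  then show "A * minv A = 1\<^sub>m n" and "minv A * A = 1\<^sub>m n" and "minv A \<in> carrier_mat n n"
    using mat_inverse(2)[OF A] by (auto simp: minv_def)
qed

lemma minv_eq_adj_mat: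
  fixes A :: "real mat"
  assumes A: "A \<in> carrier_mat n n" and d: "det A \<noteq> 0"
  shows "minv A = (1 / det A) \<cdot>\<^sub>m adj_mat A"
proof -
  have "A * ((1 / det A) \<cdot>\<^sub>m adj_mat A) = (1 / det A) \<cdot>\<^sub>m (det A \<cdot>\<^sub>m 1\<^sub>m n)"
    using mult_smult_distrib[OF A adj_mat(1)[OF A]] adj_mat(2)[OF A] by simp
  also have "\<dots> = 1\<^sub>m n" using d by (intro eq_matI) auto
  finally have adj: "(1 / det A) \<cdot>\<^sub>m adj_mat A \<in> carrier_mat n n"
      "A * ((1 / det A) \<cdot>\<^sub>m adj_mat A) = 1\<^sub>m n"
    using adj_mat(1)[OF A] by auto
  note inv = minv_inverse[OF A d]
  have "minv A = minv A * (A * ((1 / det A) \<cdot>\<^sub>m adj_mat A))"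
    using adj inv by simp
  also have "\<dots> = (minv A * A) * ((1 / det A) \<cdot>\<^sub>m adj_mat A)"
    by (rule assoc_mult_mat[symmetric, OF inv(3) A adj(1)])
  also have "\<dots> = (1 / det A) \<cdot>\<^sub>m adj_mat A"
    using inv by (simp add: left_mult_one_mat[OF adj(1)])
  finally show ?thesis .
qed

lemma transpose_minv:
  fixes A :: "real mat"
  assumes A: "A \<in> carrier_mat n n" and d: "det A \<noteq> 0" and sym: "transpose_mat A = A"
  shows "transpose_mat (minv A) = minv A"
proof -
  note inv = minv_inverse[OF A d]
  have t: "transpose_mat (minv A) \<in> carrier_mat n n" using inv by simp
  have "transpose_mat (minv A) * A = transpose_mat (A * minv A)"
    using transpose_mult[OF A inv(3)] sym by simp
  then have "transpose_mat (minv A) * A = 1\<^sub>m n" using inv by simp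
  then have "(transpose_mat (minv A) * A) * minv A = minv A" using inv by simp
  moreover have "(transpose_mat (minv A) * A) * minv A = transpose_mat (minv A) * (A * minv A)"
    by (rule assoc_mult_mat[OF t A inv(3)])
  ultimately show ?thesis using inv t by simp
qed

lemma scalar_prod_symmetric_mat:
  fixes A :: "'a :: comm_semiring_0 mat"
  assumes A: "A \<in> carrier_mat n n" and sym: "transpose_mat A = A"
    and x: "x \<in> carrier_vec n" and y: "y \<in> carrier_vec n"
  shows "x \<bullet> (A *\<^sub>v y) = (A *\<^sub>v x) \<bullet> y"
  using transpose_vec_mult_scalar[OF A y x] sym by simp

lemma measurable_det:
  fixes F :: "'a \<Rightarrow> real mat"
  assumes F: "\<And>\<omega>. \<omega> \<in> space M \<Longrightarrow> F \<omega> \<in> carrier_mat m m"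
    and entries: "\<And>i k. i < m \<Longrightarrow> k < m \<Longrightarrow> (\<lambda>\<omega>. F \<omega> $$ (i,k)) \<in> borel_measurable M"
  shows "(\<lambda>\<omega>. det (F \<omega>)) \<in> borel_measurable M"
proof -
  have "(\<lambda>\<omega>. \<Sum>p\<in>{p. p permutes {0..<m}}. signof p * (\<Prod>i=0..<m. F \<omega> $$ (i, p i)))
      \<in> borel_measurable M"
  proof (intro borel_measurable_sum borel_measurable_times borel_measurable_const borel_measurable_prod)
    fix p i assume "p \<in> {p. p permutes {0..<m}}" and "i \<in> {0..<m}"
    then show "(\<lambda>\<omega>. F \<omega> $$ (i, p i)) \<in> borel_measurable M"
      by (intro entries) (auto simp: permutes_in_image)
  qed
  then show ?thesis by (rule measurable_cong[THEN iffD1, rotated]) (simp add: det_def'[OF F])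
qed

lemma measurable_minv_entry:
  fixes F :: "'a \<Rightarrow> real mat"
  assumes F: "\<And>\<omega>. \<omega> \<in> space M \<Longrightarrow> F \<omega> \<in> carrier_mat m m"
    and entries: "\<And>i k. i < m \<Longrightarrow> k < m \<Longrightarrow> (\<lambda>\<omega>. F \<omega> $$ (i,k)) \<in> borel_measurable M"
    and d: "\<And>\<omega>. \<omega> \<in> space M \<Longrightarrow> det (F \<omega>) \<noteq> 0"
    and ik: "i < m" "k < m"
  shows "(\<lambda>\<omega>. minv (F \<omega>) $$ (i,k)) \<in> borel_measurable M"
proof -
  have minor: "(\<lambda>\<omega>. det (mat_delete (F \<omega>) k i)) \<in> borel_measurable M"
  proof (rule measurable_det[where m = "m - 1"])
    show "mat_delete (F \<omega>) k i \<in> carrier_mat (m - 1) (m - 1)" if "\<omega> \<in> space M" for \<omega>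
      using F[OF that] by (rule mat_delete_carrier)
    fix a b assume ab: "a < m - 1" "b < m - 1"
    have "(\<lambda>\<omega>. F \<omega> $$ (if a < k then a else Suc a, if b < i then b else Suc b)) \<in> borel_measurable M"
      using ab by (intro entries) auto
    moreover have "mat_delete (F \<omega>) k i $$ (a,b)
        = F \<omega> $$ (if a < k then a else Suc a, if b < i then b else Suc b)" if "\<omega> \<in> space M" for \<omega>
      using F[OF that] ab by (simp add: mat_delete_def)
    ultimately show "(\<lambda>\<omega>. mat_delete (F \<omega>) k i $$ (a,b)) \<in> borel_measurable M"
      by (subst measurable_cong) auto
  qed
  have "(\<lambda>\<omega>. 1 / det (F \<omega>) * ((-1)^(k+i) * det (mat_delete (F \<omega>) k i))) \<in> borel_measurable M"
    using measurable_det[OF F entries] minor by measurable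
  moreover have "minv (F \<omega>) $$ (i,k) = 1 / det (F \<omega>) * ((-1)^(k+i) * det (mat_delete (F \<omega>) k i))"
    if "\<omega> \<in> space M" for \<omega>
    using minv_eq_adj_mat[OF F[OF that] d[OF that]] F[OF that] ik
    by (simp add: adj_mat_def cofactor_def)
  ultimately show ?thesis by (subst measurable_cong) auto
qed

lemma det_linear_in_row:
  fixes A :: "'a :: comm_ring_1 mat"
  assumes A: "A \<in> carrier_mat n n" and k: "k < n"
  shows "\<exists>a. \<forall>y. det (mat n n (\<lambda>(r, i). if r = k then y i else A $$ (r, i))) = (\<Sum>i<n. a i * y i)"
proof (intro exI allI)
  fix y :: "nat \<Rightarrow> 'a"
  let ?B = "mat n n (\<lambda>(r, i). if r = k then y i else A $$ (r, i))"
  have "mat_delete ?B k i = mat_delete A k i" for i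
    using A by (intro eq_matI) (auto simp: mat_delete_def)
  then have "cofactor ?B k i = cofactor A k i" for i by (simp add: cofactor_def)
  then show "det ?B = (\<Sum>i<n. cofactor A k i * y i)"
    using laplace_expansion_row[of ?B n k] k by (simp add: mult.commute)
qed

lemma sum_mult_unit_vec:
  fixes f :: "nat \<Rightarrow> 'a :: semiring_1"
  assumes "i < n"
  shows "(\<Sum>k<n. f k * unit_vec n i $ k) = f i"
proof -
  have "(\<Sum>k<n. f k * unit_vec n i $ k) = (\<Sum>k<n. if k = i then f k else 0)"
    by (intro sum.cong) (auto simp: unit_vec_def)
  then show ?thesis using assms by simp
qed

lemma mtrace_eq_sum_unit_vec:
  assumes C: "C \<in> carrier_mat n n"
  shows "mtrace C = (\<Sum>i<n. unit_vec n i \<bullet> (C *\<^sub>v unit_vec n i))"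
  unfolding mtrace_def using C
  by (intro sum.cong) (auto simp: scalar_prod_left_unit[of _ n] Matrix.row_def)

lemma scalar_prod_vec: "u \<in> carrier_vec n \<Longrightarrow> vec n f \<bullet> u = (\<Sum>i<n. f i * u $ i)"
  unfolding scalar_prod_def by (simp add: atLeast0LessThan)

lemma scalar_prod_mult_mat_vec:
  "M \<in> carrier_mat n n \<Longrightarrow> vec n f \<bullet> (M *\<^sub>v vec n g) = (\<Sum>a<n. f a * (\<Sum>b<n. M $$ (a,b) * g b))"
  by (simp add: scalar_prod_def atLeast0LessThan Matrix.row_def)

lemma wgram_carrier[simp]: "wgram n J w z \<in> carrier_mat n n"
  unfolding wgram_def by simp

lemma wgram_dims[simp]: "dim_row (wgram n J w z) = n" "dim_col (wgram n J w z) = n"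
  unfolding wgram_def by simp_all

lemma wgram_index: "i < n \<Longrightarrow> k < n \<Longrightarrow> wgram n J w z $$ (i,k) = (\<Sum>j\<in>J. w j * z j i * z j k)"
  unfolding wgram_def by simp

lemma transpose_wgram: "transpose_mat (wgram n J w z) = wgram n J w z"
  by (rule eq_matI) (auto simp: wgram_index ac_simps)

lemma wgram_cong: "(\<And>j. j \<in> J \<Longrightarrow> z j = z' j) \<Longrightarrow> wgram n J w z = wgram n J w z'"
  unfolding wgram_def by (intro eq_matI) auto

lemma wgram_quadratic_form:
  assumes u: "u \<in> carrier_vec n" and J: "finite J"
  shows "u \<bullet> (wgram n J w z *\<^sub>v u) = (\<Sum>j\<in>J. w j * (vec n (z j) \<bullet> u)\<^sup>2)"
proof -
  have "(wgram n J w z *\<^sub>v u) $ i = (\<Sum>k<n. (\<Sum>j\<in>J. w j * z j i * z j k) * u $ k)" if "i < n" for i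
    using u that by (simp add: scalar_prod_def atLeast0LessThan wgram_index)
  then have "u \<bullet> (wgram n J w z *\<^sub>v u) = (\<Sum>i<n. u $ i * (\<Sum>k<n. (\<Sum>j\<in>J. w j * z j i * z j k) * u $ k))"
    unfolding scalar_prod_def atLeast0LessThan by (intro sum.cong) auto
  also have "\<dots> = (\<Sum>j\<in>J. w j * ((\<Sum>i<n. z j i * u $ i) * (\<Sum>k<n. z j k * u $ k)))"
    by (simp add: sum_distrib_left sum_distrib_right sum.swap[of _ J] ac_simps)
  also have "\<dots> = (\<Sum>j\<in>J. w j * (vec n (z j) \<bullet> u)\<^sup>2)"
    using u by (simp add: scalar_prod_vec power2_eq_square)
  finally show ?thesis .
qed

definition spanning :: "nat \<Rightarrow> nat set \<Rightarrow> (nat \<Rightarrow> nat \<Rightarrow> real) \<Rightarrow> bool" where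
  "spanning n J z \<longleftrightarrow> (\<forall>x\<in>carrier_vec n. x \<noteq> 0\<^sub>v n \<longrightarrow> (\<exists>j\<in>J. vec n (z j) \<bullet> x \<noteq> 0))"

lemma det_wgram_nonzero:
  assumes K: "finite K" "J \<subseteq> K" and w: "\<And>j. j \<in> K \<Longrightarrow> w j > 0" and span: "spanning n J z"
  shows "det (wgram n K w z) \<noteq> 0"
proof
  assume "det (wgram n K w z) = 0"
  then obtain x where x: "x \<in> carrier_vec n" "x \<noteq> 0\<^sub>v n" "wgram n K w z *\<^sub>v x = 0\<^sub>v n"
    using det_0_iff_vec_prod_zero[OF wgram_carrier] by blast
  obtain j0 where j0: "j0 \<in> J" "vec n (z j0) \<bullet> x \<noteq> 0"
    using span x unfolding spanning_def by blast
  have "w j0 > 0" using w j0(1) K(2) by auto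
  then have "0 < w j0 * (vec n (z j0) \<bullet> x)\<^sup>2" using j0(2) by simp
  also have "\<dots> \<le> (\<Sum>j\<in>K. w j * (vec n (z j) \<bullet> x)\<^sup>2)"
    using K j0 w by (intro member_le_sum) (auto intro!: mult_nonneg_nonneg simp: less_imp_le)
  also have "\<dots> = x \<bullet> (wgram n K w z *\<^sub>v x)" by (rule wgram_quadratic_form[OF x(1) K(1), symmetric])
  also have "\<dots> = 0" using x by simp
  finally show False by simp
qed

section \<open>Spanning of the other feature vectors\<close>

definition skip_index :: "nat \<Rightarrow> nat \<Rightarrow> nat" where
  "skip_index t k = (if k < t then k else Suc k)"

definition others_block :: "nat \<Rightarrow> nat \<Rightarrow> (nat \<Rightarrow> nat \<Rightarrow> real) \<Rightarrow> real mat" where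
  "others_block n t zs = mat n n (\<lambda>(k, i). zs (skip_index t k) i)"

lemma skip_index_in: "n < d \<Longrightarrow> k < n \<Longrightarrow> skip_index t k \<in> {..<d} - {t}"
  by (auto simp: skip_index_def)

lemma skip_index_eq_iff: "skip_index t k = skip_index t k' \<longleftrightarrow> k = k'"
  by (auto simp: skip_index_def)

lemma spanning_of_det_others_block:
  assumes nd: "n < d" and det: "det (others_block n t zs) \<noteq> 0"
  shows "spanning n ({..<d} - {t}) zs"
  unfolding spanning_def
proof (intro ballI impI, rule ccontr)
  fix x :: "real vec" assume x: "x \<in> carrier_vec n" "x \<noteq> 0\<^sub>v n"
    and "\<not> (\<exists>j\<in>{..<d} - {t}. vec n (zs j) \<bullet> x \<noteq> 0)"
  then have orth: "\<And>j. j \<in> {..<d} - {t} \<Longrightarrow> vec n (zs j) \<bullet> x = 0" by blast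
  have Z: "others_block n t zs \<in> carrier_mat n n" unfolding others_block_def by simp
  have "Matrix.row (others_block n t zs) k = vec n (zs (skip_index t k))" if "k < n" for k
    using that by (intro eq_vecI) (auto simp: others_block_def)
  then have "others_block n t zs *\<^sub>v x = 0\<^sub>v n"
    using Z x skip_index_in[OF nd] by (intro eq_vecI) (auto simp: orth)
  then show False using det det_0_iff_vec_prod_zero[OF Z] x by blast
qed

lemma AE_det_others_block:
  assumes nd: "n < d"
  shows "AE zs in others_measure n d t. det (others_block n t zs) \<noteq> 0"
  unfolding others_measure_def
proof (rule AE_PiM_gauss_vec_nonzero)
  let ?J = "{..<d} - {t}"
  let ?M = "PiM ?J (\<lambda>_. gauss_vec n)"
  have "(\<lambda>zs. zs (skip_index t k) i) \<in> borel_measurable ?M" if "k < n" "i < n" for k i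
    by (rule measurable_compose[OF measurable_component_singleton[OF skip_index_in[OF nd that(1)]]
          measurable_gauss_vec_component[OF that(2)]])
  then show "(\<lambda>zs. det (others_block n t zs)) \<in> borel_measurable ?M"
    by (intro measurable_det[where m = n]) (auto simp: others_block_def)
next
  fix v x
  let ?Z = "others_block n t x"
  show "\<exists>a b. \<forall>y\<in>space (gauss_vec n). det (others_block n t (x(v:=y))) = (\<Sum>i<n. a i * y i) + b"
  proof (cases "\<exists>k<n. v = skip_index t k")
    case True
    then obtain k where k: "k < n" "v = skip_index t k" by blast
    obtain a where
      a: "\<And>y. det (mat n n (\<lambda>(r, i). if r = k then y i else ?Z $$ (r, i))) = (\<Sum>i<n. a i * y i)"
      using det_linear_in_row[of ?Z n k] k by (auto simp: others_block_def)
    have "others_block n t (x(v:=y)) = mat n n (\<lambda>(r, i). if r = k then y i else ?Z $$ (r, i))" for y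
      using k by (intro eq_matI) (auto simp: others_block_def skip_index_eq_iff)
    then have "det (others_block n t (x(v:=y))) = (\<Sum>i<n. a i * y i) + 0" for y by (simp add: a)
    then show ?thesis by blast
  next
    case False
    then have "others_block n t (x(v:=y)) = ?Z" for y
      by (intro eq_matI) (auto simp: others_block_def)
    then show ?thesis by (intro exI[of _ "\<lambda>_. 0"] exI[of _ "det ?Z"]) simp
  qed
next
  define x0 where "x0 = (\<lambda>j\<in>{..<d} - {t}. \<lambda>i\<in>{..<n}. if j = skip_index t i then 1 else (0::real))"
  have "others_block n t x0 = 1\<^sub>m n"
    using skip_index_in[OF nd] by (intro eq_matI) (auto simp: others_block_def x0_def skip_index_eq_iff)
  moreover have "x0 \<in> space (PiM ({..<d} - {t}) (\<lambda>_. gauss_vec n))"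
    unfolding x0_def by (auto simp: space_PiM space_gauss_vec)
  ultimately show "\<exists>x\<in>space (PiM ({..<d} - {t}) (\<lambda>_. gauss_vec n)). det (others_block n t x) \<noteq> 0"
    by force
qed simp

lemma AE_spanning_others:
  assumes "n < d"
  shows "AE zs in others_measure n d t. spanning n ({..<d} - {t}) zs"
  using AE_det_others_block[OF assms] by eventually_elim (rule spanning_of_det_others_block[OF assms])

section \<open>Tail bounds in the sampling model\<close>

lemma prob_space_flip_measure: "prob_space (flip_measure n \<nu>)"
  unfolding flip_measure_def by (rule prob_space_PiM) (rule prob_space_measure_pmf)

lemma prob_space_zt_y_measure: "prob_space (zt_y_measure n \<nu>)"
  unfolding zt_y_measure_def by (rule prob_space_pair[OF prob_space_gauss_vec prob_space_flip_measure])

lemma measurable_zt_component: "i < n \<Longrightarrow> (\<lambda>\<omega>. fst \<omega> i) \<in> borel_measurable (zt_y_measure n \<nu>)"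
  unfolding zt_y_measure_def
  by (rule measurable_compose[OF measurable_fst measurable_gauss_vec_component])

lemma measurable_labels: "i < n \<Longrightarrow> (\<lambda>\<omega>. labels (fst \<omega>) (snd \<omega>) i) \<in> borel_measurable (zt_y_measure n \<nu>)"
proof -
  assume i: "i < n"
  have "(\<lambda>\<omega>. snd \<omega> i) \<in> measurable (zt_y_measure n \<nu>) (measure_pmf (bernoulli_pmf \<nu>))"
    unfolding zt_y_measure_def flip_measure_def
    by (rule measurable_compose[OF measurable_snd measurable_component_singleton]) (use i in simp)
  then have "(\<lambda>\<omega>. snd \<omega> i) \<in> measurable (zt_y_measure n \<nu>) (count_space UNIV)" by simp
  then show ?thesis unfolding labels_def using measurable_zt_component[OF i] by measurable
qed

lemma emeasure_pair_measure_le_sections: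
  assumes M1: "sigma_finite_measure M1" and M2: "prob_space M2" and A: "A \<in> sets (M1 \<Otimes>\<^sub>M M2)"
    and sections: "\<And>y. y \<in> space M2 \<Longrightarrow> emeasure M1 ((\<lambda>x. (x, y)) -` A) \<le> e"
  shows "emeasure (M1 \<Otimes>\<^sub>M M2) A \<le> e"
proof -
  interpret M2: prob_space M2 by fact
  interpret pair_sigma_finite M1 M2
    by (rule pair_sigma_finite.intro) (simp_all add: M1 M2.sigma_finite_measure)
  have "emeasure (M1 \<Otimes>\<^sub>M M2) A = (\<integral>\<^sup>+y. emeasure M1 ((\<lambda>x. (x, y)) -` A) \<partial>M2)"
    by (rule emeasure_pair_measure_alt2[OF A])
  also have "\<dots> \<le> (\<integral>\<^sup>+y. e \<partial>M2)" by (intro nn_integral_mono sections)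
  also have "\<dots> = e" by (simp add: M2.emeasure_space_1)
  finally show ?thesis .
qed

lemma (in prob_space) prob_ge_of_compl_subset_union:
  assumes E: "E \<in> events" and A: "A \<in> events" and B: "B \<in> events"
    and sub: "space M - (A \<union> B) \<subseteq> E" and "prob A \<le> a" and "prob B \<le> b"
  shows "1 - (a + b) \<le> prob E"
proof -
  have "1 - (a + b) \<le> 1 - prob (A \<union> B)"
    using measure_subadditive[OF A B] assms by (simp add: emeasure_eq_measure)
  also have "\<dots> = prob (space M - (A \<union> B))" using A B by (simp add: prob_compl)
  also have "\<dots> \<le> prob E" using sub E by (rule finite_measure_mono)
  finally show ?thesis .
qed

lemma measure_zt_y_quadratic_tail:
  fixes w :: "'j \<Rightarrow> nat \<Rightarrow> real" and Y :: "nat \<Rightarrow> (nat \<Rightarrow> real) \<times> (nat \<Rightarrow> bool) \<Rightarrow> real"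
  assumes n: "2 \<le> n" and J: "finite J" and T: "T = (\<Sum>j\<in>J. \<Sum>i<n. (w j i)\<^sup>2)"
    and Ym: "\<And>i. i < n \<Longrightarrow> Y i \<in> borel_measurable (zt_y_measure n \<nu>)"
    and Y: "\<And>fl. subgaussian_vector (gauss_vec n) n (\<lambda>i zt. Y i (zt, fl))"
  shows "measure (zt_y_measure n \<nu>)
      {\<omega> \<in> space (zt_y_measure n \<nu>). 8 * T * ln n < (\<Sum>j\<in>J. (\<Sum>i<n. w j i * Y i \<omega>)\<^sup>2)} \<le> 1 / n"
proof -
  interpret prob_space "zt_y_measure n \<nu>" by (rule prob_space_zt_y_measure)
  define F where "F = {\<omega> \<in> space (zt_y_measure n \<nu>). 8 * T * ln n < (\<Sum>j\<in>J. (\<Sum>i<n. w j i * Y i \<omega>)\<^sup>2)}"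
  have "(\<lambda>\<omega>. \<Sum>j\<in>J. (\<Sum>i<n. w j i * Y i \<omega>)\<^sup>2) \<in> borel_measurable (zt_y_measure n \<nu>)"
    by (intro borel_measurable_sum borel_measurable_power borel_measurable_times
        borel_measurable_const Ym) auto
  then have "F \<in> sets (zt_y_measure n \<nu>)" unfolding F_def by measurable
  have "emeasure (zt_y_measure n \<nu>) F \<le> ennreal (1 / n)"
    unfolding zt_y_measure_def
  proof (rule emeasure_pair_measure_le_sections)
    fix fl assume "fl \<in> space (flip_measure n \<nu>)"
    then have "(\<lambda>zt. (zt, fl)) -` F
        = {zt \<in> space (gauss_vec n). 8 * T * ln n < (\<Sum>j\<in>J. (\<Sum>i<n. w j i * Y i (zt, fl))\<^sup>2)}"
      by (auto simp: F_def zt_y_measure_def space_pair_measure)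
    then show "emeasure (gauss_vec n) ((\<lambda>zt. (zt, fl)) -` F) \<le> ennreal (1 / n)"
      using subgaussian_quadratic_tail[OF Y J T n] by simp
  qed (use \<open>F \<in> sets (zt_y_measure n \<nu>)\<close> prob_space_flip_measure
      prob_space_imp_sigma_finite[OF prob_space_gauss_vec] in \<open>simp_all add: zt_y_measure_def\<close>)
  then show ?thesis unfolding F_def by (simp add: emeasure_eq_measure)
qed

lemma sum_squares_diff_le:
  fixes a b :: "nat \<Rightarrow> real"
  shows "(\<Sum>j\<in>J. (\<Sum>i<n. w j i * (a i - s * b i))\<^sup>2)
    \<le> 2 * (\<Sum>j\<in>J. (\<Sum>i<n. w j i * a i)\<^sup>2) + 2 * s\<^sup>2 * (\<Sum>j\<in>J. (\<Sum>i<n. w j i * b i)\<^sup>2)"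
proof -
  have "(p - s * q)\<^sup>2 \<le> 2 * p\<^sup>2 + 2 * s\<^sup>2 * q\<^sup>2" for p q :: real
    using zero_le_power2[of "p + s * q"] by (simp add: power2_eq_square algebra_simps)
  moreover have "(\<Sum>i<n. w j i * (a i - s * b i)) = (\<Sum>i<n. w j i * a i) - s * (\<Sum>i<n. w j i * b i)" for j
    by (simp add: algebra_simps sum_subtractf sum_distrib_left)
  ultimately have "(\<Sum>j\<in>J. (\<Sum>i<n. w j i * (a i - s * b i))\<^sup>2)
      \<le> (\<Sum>j\<in>J. 2 * (\<Sum>i<n. w j i * a i)\<^sup>2 + 2 * s\<^sup>2 * (\<Sum>i<n. w j i * b i)\<^sup>2)"
    by (intro sum_mono) presburger
  then show ?thesis by (simp add: sum.distrib sum_distrib_left)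
qed

lemma measure_quadratic_form_labels_diff:
  fixes w :: "'j \<Rightarrow> nat \<Rightarrow> real"
  assumes n: "2 \<le> n" and J: "finite J" and T: "T = (\<Sum>j\<in>J. \<Sum>i<n. (w j i)\<^sup>2)"
    and s[measurable]: "s \<in> borel_measurable (zt_y_measure n \<nu>)"
  defines "Q \<equiv> \<lambda>Y. \<Sum>j\<in>J. (\<Sum>i<n. w j i * Y i)\<^sup>2"
  shows "measure (zt_y_measure n \<nu>) {\<omega> \<in> space (zt_y_measure n \<nu>).
      Q (\<lambda>i. labels (fst \<omega>) (snd \<omega>) i - s \<omega> * fst \<omega> i) \<le> 16 * (1 + (s \<omega>)\<^sup>2) * T * ln n}
    \<ge> 1 - 2 / n"
proof -
  let ?P = "zt_y_measure n \<nu>"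
  interpret prob_space ?P by (rule prob_space_zt_y_measure)
  define L where "L = 8 * T * ln n"
  define Fy where "Fy = {\<omega> \<in> space ?P. L < Q (\<lambda>i. labels (fst \<omega>) (snd \<omega>) i)}"
  define Fz where "Fz = {\<omega> \<in> space ?P. L < Q (\<lambda>i. fst \<omega> i)}"
  have Q: "(\<lambda>\<omega>. Q (Y \<omega>)) \<in> borel_measurable ?P"
    if "\<And>i. i < n \<Longrightarrow> (\<lambda>\<omega>. Y \<omega> i) \<in> borel_measurable ?P" for Y
    unfolding Q_def by (intro borel_measurable_sum borel_measurable_power borel_measurable_times
        borel_measurable_const that) auto
  have [measurable]: "(\<lambda>\<omega>. Q (\<lambda>i. labels (fst \<omega>) (snd \<omega>) i)) \<in> borel_measurable ?P"
    "(\<lambda>\<omega>. Q (\<lambda>i. fst \<omega> i)) \<in> borel_measurable ?P"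
    "(\<lambda>\<omega>. Q (\<lambda>i. labels (fst \<omega>) (snd \<omega>) i - s \<omega> * fst \<omega> i)) \<in> borel_measurable ?P"
    by (intro Q borel_measurable_diff borel_measurable_times s measurable_labels measurable_zt_component;
        assumption)+
  have "prob Fy \<le> 1 / n" unfolding Fy_def L_def Q_def
    by (rule measure_zt_y_quadratic_tail[OF n J T]) (simp_all add: measurable_labels subgaussian_labels)
  moreover have "prob Fz \<le> 1 / n" unfolding Fz_def L_def Q_def
    by (rule measure_zt_y_quadratic_tail[OF n J T])
      (simp_all add: measurable_zt_component subgaussian_gauss_vec)
  moreover have "Fy \<in> events" "Fz \<in> events" unfolding Fy_def Fz_def by measurable
  moreover have "{\<omega> \<in> space ?P. Q (\<lambda>i. labels (fst \<omega>) (snd \<omega>) i - s \<omega> * fst \<omega> i)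
      \<le> 16 * (1 + (s \<omega>)\<^sup>2) * T * ln n} \<in> events"
    by measurable
  moreover have "space ?P - (Fy \<union> Fz) \<subseteq> {\<omega> \<in> space ?P.
      Q (\<lambda>i. labels (fst \<omega>) (snd \<omega>) i - s \<omega> * fst \<omega> i) \<le> 16 * (1 + (s \<omega>)\<^sup>2) * T * ln n}"
  proof safe
    fix \<omega> assume "\<omega> \<in> space ?P" "\<omega> \<notin> Fy" "\<omega> \<notin> Fz"
    then have Qy: "Q (\<lambda>i. labels (fst \<omega>) (snd \<omega>) i) \<le> L" and Qz: "Q (\<lambda>i. fst \<omega> i) \<le> L"
      by (auto simp: Fy_def Fz_def)
    have "Q (\<lambda>i. labels (fst \<omega>) (snd \<omega>) i - s \<omega> * fst \<omega> i)
        \<le> 2 * Q (\<lambda>i. labels (fst \<omega>) (snd \<omega>) i) + 2 * (s \<omega>)\<^sup>2 * Q (\<lambda>i. fst \<omega> i)"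
      unfolding Q_def by (rule sum_squares_diff_le)
    also have "2 * Q (\<lambda>i. labels (fst \<omega>) (snd \<omega>) i) + 2 * (s \<omega>)\<^sup>2 * Q (\<lambda>i. fst \<omega> i)
        \<le> 2 * L + 2 * (s \<omega>)\<^sup>2 * L"
      using Qy Qz by (intro add_mono mult_left_mono) auto
    also have "\<dots> = 16 * (1 + (s \<omega>)\<^sup>2) * T * ln n" by (simp add: L_def algebra_simps)
    finally show "Q (\<lambda>i. labels (fst \<omega>) (snd \<omega>) i - s \<omega> * fst \<omega> i) \<le> 16 * (1 + (s \<omega>)\<^sup>2) * T * ln n" .
  qed
  ultimately show ?thesis using prob_ge_of_compl_subset_union[of _ Fy Fz "1 / n" "1 / n"] by simp
qed

section \<open>The leave-one-out Gram matrix\<close>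

definition ctilde_factor ::
  "nat \<Rightarrow> nat \<Rightarrow> nat \<Rightarrow> (nat \<Rightarrow> real) \<Rightarrow> (nat \<Rightarrow> nat \<Rightarrow> real) \<Rightarrow> nat \<Rightarrow> nat \<Rightarrow> real" where
  "ctilde_factor n d t lam z j i = lam j * (minv (Amat_minus n d t lam z) *\<^sub>v vec n (z j)) $ i"

lemma det_Amat_minus_nonzero:
  assumes "spanning n ({..<d} - {t}) z" and "\<And>j. j < d \<Longrightarrow> lam j > 0"
  shows "det (Amat_minus n d t lam z) \<noteq> 0"
  unfolding Amat_minus_def by (rule det_wgram_nonzero[OF _ subset_refl]) (use assms in auto)

lemma Ctilde_quadratic_form:
  assumes span: "spanning n ({..<d} - {t}) z" and lam: "\<And>j. j < d \<Longrightarrow> lam j > 0"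
    and x: "x \<in> carrier_vec n"
  shows "x \<bullet> (Ctilde n d t lam z *\<^sub>v x)
    = (\<Sum>j\<in>{..<d} - {t}. (\<Sum>i<n. ctilde_factor n d t lam z j i * x $ i)\<^sup>2)"
proof -
  let ?J = "{..<d} - {t}"
  let ?A = "Amat_minus n d t lam z"
  let ?M = "minv ?A"
  let ?B = "wgram n ?J (\<lambda>j. (lam j)\<^sup>2) z"
  have A: "?A \<in> carrier_mat n n" "det ?A \<noteq> 0"
    using det_Amat_minus_nonzero[OF span lam] by (simp_all add: Amat_minus_def)
  note M = minv_inverse(3)[OF A]
  have sym: "transpose_mat ?M = ?M"
    using transpose_minv[OF A] by (simp add: Amat_minus_def transpose_wgram)
  have Mx: "?M *\<^sub>v x \<in> carrier_vec n" using M x by simp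
  have "x \<bullet> (Ctilde n d t lam z *\<^sub>v x) = x \<bullet> (?M *\<^sub>v (?B *\<^sub>v (?M *\<^sub>v x)))"
    unfolding Ctilde_def using M x by (simp add: assoc_mult_mat_vec[of _ n n _ n])
  also have "\<dots> = (?M *\<^sub>v x) \<bullet> (?B *\<^sub>v (?M *\<^sub>v x))"
    using M sym x mult_mat_vec_carrier[OF wgram_carrier Mx] by (intro scalar_prod_symmetric_mat) auto
  also have "\<dots> = (\<Sum>j\<in>?J. (lam j)\<^sup>2 * (vec n (z j) \<bullet> (?M *\<^sub>v x))\<^sup>2)"
    by (rule wgram_quadratic_form[OF Mx]) simp
  also have "\<dots> = (\<Sum>j\<in>?J. (\<Sum>i<n. ctilde_factor n d t lam z j i * x $ i)\<^sup>2)"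
  proof (intro sum.cong refl)
    fix j
    have "vec n (z j) \<bullet> (?M *\<^sub>v x) = (?M *\<^sub>v vec n (z j)) \<bullet> x"
      using M sym x by (intro scalar_prod_symmetric_mat) auto
    also have "\<dots> = (\<Sum>i<n. (?M *\<^sub>v vec n (z j)) $ i * x $ i)"
      using x by (simp add: scalar_prod_def atLeast0LessThan)
    finally have "lam j * (vec n (z j) \<bullet> (?M *\<^sub>v x)) = (\<Sum>i<n. ctilde_factor n d t lam z j i * x $ i)"
      by (simp add: ctilde_factor_def sum_distrib_left ac_simps)
    then show "(lam j)\<^sup>2 * (vec n (z j) \<bullet> (?M *\<^sub>v x))\<^sup>2
        = (\<Sum>i<n. ctilde_factor n d t lam z j i * x $ i)\<^sup>2"
      by (metis power_mult_distrib)
  qed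
  finally show ?thesis .
qed

lemma mtrace_Ctilde:
  assumes span: "spanning n ({..<d} - {t}) z" and lam: "\<And>j. j < d \<Longrightarrow> lam j > 0"
  shows "mtrace (Ctilde n d t lam z) = (\<Sum>j\<in>{..<d} - {t}. \<Sum>i<n. (ctilde_factor n d t lam z j i)\<^sup>2)"
proof -
  have "Ctilde n d t lam z \<in> carrier_mat n n"
    using minv_inverse(3)[of "Amat_minus n d t lam z" n] det_Amat_minus_nonzero[OF span lam]
    unfolding Ctilde_def Amat_minus_def by (auto intro!: mult_carrier_mat)
  then have "mtrace (Ctilde n d t lam z) = (\<Sum>i<n. unit_vec n i \<bullet> (Ctilde n d t lam z *\<^sub>v unit_vec n i))"
    by (rule mtrace_eq_sum_unit_vec)
  also have "\<dots> = (\<Sum>i<n. \<Sum>j\<in>{..<d} - {t}. (ctilde_factor n d t lam z j i)\<^sup>2)"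
    by (intro sum.cong refl)
      (simp add: Ctilde_quadratic_form[OF span lam] sum_mult_unit_vec del: index_unit_vec)
  also have "\<dots> = (\<Sum>j\<in>{..<d} - {t}. \<Sum>i<n. (ctilde_factor n d t lam z j i)\<^sup>2)"
    by (rule sum.swap)
  finally show ?thesis .
qed

lemma spanning_full_z: "spanning n ({..<d} - {t}) zs \<Longrightarrow> spanning n ({..<d} - {t}) (full_z t zs zt)"
  unfolding spanning_def full_z_def by auto

lemma Ctilde_full_z: "Ctilde n d t lam (full_z t zs zt) = Ctilde n d t lam zs"
proof -
  have "wgram n ({..<d} - {t}) w (full_z t zs zt) = wgram n ({..<d} - {t}) w zs" for w
    by (rule wgram_cong) (simp add: full_z_def)
  then show ?thesis unfolding Ctilde_def Amat_minus_def by simp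
qed

lemma det_Amat_full_z_nonzero:
  assumes "spanning n ({..<d} - {t}) zs" and "\<And>j. j < d \<Longrightarrow> lam j > 0"
  shows "det (Amat n d lam (full_z t zs zt)) \<noteq> 0"
  unfolding Amat_def using spanning_full_z[OF assms(1)] assms(2)
  by (intro det_wgram_nonzero[of "{..<d}" "{..<d} - {t}"]) auto

lemma SU_b_full_z:
  assumes span: "spanning n ({..<d} - {t}) zs" and td: "t < d" and lam: "\<And>j. j < d \<Longrightarrow> lam j > 0"
  shows "SU_b n d t lam (full_z t zs zt) y
    = lam t * (\<Sum>a<n. zt a * (\<Sum>b<n. minv (Amat n d lam (full_z t zs zt)) $$ (a,b) * y b))"
proof -
  have "minv (Amat n d lam (full_z t zs zt)) \<in> carrier_mat n n"
    using det_Amat_full_z_nonzero[OF span lam] by (intro minv_inverse(3)) (simp_all add: Amat_def)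
  moreover have "sqrt (lam t) * sqrt (lam t) = lam t" using lam[OF td] by simp
  ultimately show ?thesis
    unfolding SU_b_def alpha_hat_def
    by (simp add: scalar_prod_mult_mat_vec full_z_def mult.assoc[symmetric])
qed

lemma measurable_SU_b_full_z:
  assumes span: "spanning n ({..<d} - {t}) zs" and td: "t < d" and lam: "\<And>j. j < d \<Longrightarrow> lam j > 0"
  shows "(\<lambda>\<omega>. SU_b n d t lam (full_z t zs (fst \<omega>)) (labels (fst \<omega>) (snd \<omega>)))
    \<in> borel_measurable (zt_y_measure n \<nu>)"
proof -
  let ?A = "\<lambda>\<omega>::(nat \<Rightarrow> real) \<times> (nat \<Rightarrow> bool). Amat n d lam (full_z t zs (fst \<omega>))"
  have entries: "(\<lambda>\<omega>. ?A \<omega> $$ (a,b)) \<in> borel_measurable (zt_y_measure n \<nu>)" if "a < n" "b < n" for a b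
  proof -
    have "(\<lambda>\<omega>. \<Sum>j<d. lam j * (if j = t then fst \<omega> a else zs j a) * (if j = t then fst \<omega> b else zs j b))
        \<in> borel_measurable (zt_y_measure n \<nu>)"
      using measurable_zt_component[OF that(1)] measurable_zt_component[OF that(2)] by measurable
    moreover have "(\<lambda>\<omega>. ?A \<omega> $$ (a,b))
        = (\<lambda>\<omega>. \<Sum>j<d. lam j * (if j = t then fst \<omega> a else zs j a) * (if j = t then fst \<omega> b else zs j b))"
      using that by (auto simp: Amat_def wgram_index full_z_def intro!: sum.cong)
    ultimately show ?thesis by (simp only:)
  qed
  have "det (?A \<omega>) \<noteq> 0" for \<omega> by (rule det_Amat_full_z_nonzero[OF span lam])
  then have "(\<lambda>\<omega>. minv (?A \<omega>) $$ (a,b)) \<in> borel_measurable (zt_y_measure n \<nu>)"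
    if "a < n" "b < n" for a b
    using that entries by (intro measurable_minv_entry[where m = n]) (auto simp: Amat_def)
  then have "(\<lambda>\<omega>. lam t * (\<Sum>a<n. fst \<omega> a * (\<Sum>b<n. minv (?A \<omega>) $$ (a,b) * labels (fst \<omega>) (snd \<omega>) b)))
      \<in> borel_measurable (zt_y_measure n \<nu>)"
    by (intro borel_measurable_times borel_measurable_const borel_measurable_sum
        measurable_zt_component measurable_labels) auto
  then show ?thesis by (simp add: SU_b_full_z[OF span td lam])
qed

lemma ytilde_Ctilde_full_z:
  fixes zt y :: "nat \<Rightarrow> real"
  assumes span: "spanning n ({..<d} - {t}) zs" and lam: "\<And>j. j < d \<Longrightarrow> lam j > 0"
  defines "yt \<equiv> ytilde n d t lam (full_z t zs zt) y" and "s \<equiv> SU_b n d t lam (full_z t zs zt) y"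
  shows "yt \<bullet> (Ctilde n d t lam zs *\<^sub>v yt)
    = (\<Sum>j\<in>{..<d} - {t}. (\<Sum>i<n. ctilde_factor n d t lam zs j i * (y i - s * zt i))\<^sup>2)"
proof -
  have "yt = vec n (\<lambda>i. y i - s * zt i)"
    unfolding yt_def s_def ytilde_def by (intro eq_vecI) (simp_all add: full_z_def)
  then show ?thesis by (simp add: Ctilde_quadratic_form[OF span lam])
qed

lemma prob_ytilde_quadratic_form_le:
  assumes n: "2 \<le> n" and td: "t < d" and lam: "\<And>j. j < d \<Longrightarrow> lam j > 0"
    and span: "spanning n ({..<d} - {t}) zs"
  shows "measure (zt_y_measure n \<nu>)
      {(zt, fl) \<in> space (zt_y_measure n \<nu>).
         let z = full_z t zs zt; y = labels zt fl;
             yt = ytilde n d t lam z y; C = Ctilde n d t lam z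
         in yt \<bullet> (C *\<^sub>v yt) \<le> 16 * (1 + (SU_b n d t lam z y)\<^sup>2) * mtrace C * ln (real n)}
    \<ge> 1 - 2 / real n"
proof -
  let ?s = "\<lambda>\<omega>. SU_b n d t lam (full_z t zs (fst \<omega>)) (labels (fst \<omega>) (snd \<omega>))"
  have "1 - 2 / n \<le> measure (zt_y_measure n \<nu>) {\<omega> \<in> space (zt_y_measure n \<nu>).
      (\<Sum>j\<in>{..<d} - {t}. (\<Sum>i<n. ctilde_factor n d t lam zs j i *
        (labels (fst \<omega>) (snd \<omega>) i - ?s \<omega> * fst \<omega> i))\<^sup>2)
      \<le> 16 * (1 + (?s \<omega>)\<^sup>2) * mtrace (Ctilde n d t lam zs) * ln n}"
    using measure_quadratic_form_labels_diff[OF n _ mtrace_Ctilde[OF span lam]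
        measurable_SU_b_full_z[OF span td lam]]
    by simp
  also have "{\<omega> \<in> space (zt_y_measure n \<nu>).
      (\<Sum>j\<in>{..<d} - {t}. (\<Sum>i<n. ctilde_factor n d t lam zs j i *
        (labels (fst \<omega>) (snd \<omega>) i - ?s \<omega> * fst \<omega> i))\<^sup>2)
      \<le> 16 * (1 + (?s \<omega>)\<^sup>2) * mtrace (Ctilde n d t lam zs) * ln n}
    = {(zt, fl) \<in> space (zt_y_measure n \<nu>).
         let z = full_z t zs zt; y = labels zt fl;
             yt = ytilde n d t lam z y; C = Ctilde n d t lam z
         in yt \<bullet> (C *\<^sub>v yt) \<le> 16 * (1 + (SU_b n d t lam z y)\<^sup>2) * mtrace C * ln (real n)}"
    by (auto simp: Let_def Ctilde_full_z ytilde_Ctilde_full_z[OF span lam])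
  finally show ?thesis .
qed

lemma AE_prob_ytilde_quadratic_form_le:
  assumes "2 \<le> n" "n < d" "t < d" "\<forall>j<d. lam j > 0"
  shows "AE zs in others_measure n d t.
    measure (zt_y_measure n \<nu>)
      {(zt, fl) \<in> space (zt_y_measure n \<nu>).
         let z = full_z t zs zt; y = labels zt fl;
             yt = ytilde n d t lam z y; C = Ctilde n d t lam z
         in yt \<bullet> (C *\<^sub>v yt) \<le> 16 * (1 + (SU_b n d t lam z y)\<^sup>2) * mtrace C * ln (real n)}
    \<ge> 1 - 2 / real n"
  using AE_spanning_others[OF assms(2)]
  by eventually_elim (rule prob_ytilde_quadratic_form_le[OF assms(1,3)], use assms(4) in auto)

theorem lemma7:
  "\<exists>c::real. c > 0 \<and> (\<exists>c6::real. c6 > 0 \<and>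
     (\<forall>(n::nat) (d::nat) (t::nat) (lam::nat \<Rightarrow> real) (\<nu>::real).
        real n \<ge> c6 \<longrightarrow> n < d \<longrightarrow> t < d \<longrightarrow> (\<forall>j<d. lam j > 0) \<longrightarrow>
        0 \<le> \<nu> \<longrightarrow> \<nu> < 1/2 \<longrightarrow>
        (AE zs in others_measure n d t.
           measure (zt_y_measure n \<nu>)
             {(zt, fl) \<in> space (zt_y_measure n \<nu>).
                let z = full_z t zs zt; y = labels zt fl;
                    yt = ytilde n d t lam z y; C = Ctilde n d t lam z
                in yt \<bullet> (C *\<^sub>v yt)
                   \<le> 2 * (1 + 1 / c) * (1 + (SU_b n d t lam z y)\<^sup>2) * mtrace C * ln (real n)}
           \<ge> 1 - 2 / real n)))"
proof -
  have sixteen: "2 * (1 + 1 / (1 / 7)) = (16::real)" by simp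
  show ?thesis
    by (rule exI[of _ "1/7"], intro conjI exI[of _ 2] allI impI, unfold sixteen)
      (rule AE_prob_ytilde_quadratic_form_le | simp)+
qed

end
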